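(* For a nonzero ideal $E$ of $C(X)_\mathcal{P}$ the following are equivalent: (1) $E$ intersects every nonzero $z$-ideal of $C(X)_\mathcal{P}$ nontrivially; (2) $E$ is an essential ideal of $C(X)_\mathcal{P}$; (3) $int_{X_\mathcal{P}}\bigcap Z_\mathcal{P}[E]=\emptyset$, i.e. $\bigcap\{Z_\mathcal{P}(f): f\in E\}$ is nowhere dense in $X_\mathcal{P}$.
   Context: Let $(X,\tau)$ be a $T_1$ topological space and $\mathcal{P}$ an ideal of closed subsets of $X$ (a nonempty family of closed sets closed under finite unions and under taking closed subsets). For $f\colon X\to\mathbb{R}$, $D_f$ denotes the set of points of discontinuity of $f$, and $C(X)_\mathcal{P}=\{f\colon X\to\mathbb{R} : \overline{D_f}\in\mathcal{P}\}$, a commutative ring with unity under pointwise operations. For $f\in C(X)_\mathcal{P}$, $Z_\mathcal{P}(f)=\{x: f(x)=0\}$, $coz(f)=X\setminus Z_\mathcal{P}(f)$, and for an ideal $I$, $Z_\mathcal{P}[I]=\{Z_\mathcal{P}(f): f\in I\}$. $X_\mathcal{P}$ is $X$ with the topology having base $\{coz(f): f\in C(X)_\mathcal{P}\}$, $int_{X_\mathcal{P}}$ its interior operator. An ideal is essential if it intersects every nonzero ideal nontrivially. In a commutative ring, $M(a)$ is the intersection of all maximal ideals containing $a$, and an ideal $I$ is a $z$-ideal if $a\in I\Rightarrow M(a)\subseteq I$. *)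

theory Defs
  imports "HOL-Analysis.Analysis" "HOL-Algebra.Ideal"
begin

definition cont_at :: "'a topology \<Rightarrow> ('a \<Rightarrow> real) \<Rightarrow> 'a \<Rightarrow> bool" where
  "cont_at X f x \<longleftrightarrow>
     (\<forall>V. open V \<and> f x \<in> V \<longrightarrow> (\<exists>U. openin X U \<and> x \<in> U \<and> f ` U \<subseteq> V))"

definition disc_set :: "'a topology \<Rightarrow> ('a \<Rightarrow> real) \<Rightarrow> 'a set" where
  "disc_set X f = {x \<in> topspace X. \<not> cont_at X f x}"

definition closed_ideal :: "'a topology \<Rightarrow> 'a set set \<Rightarrow> bool" where
  "closed_ideal X P \<longleftrightarrow> P \<noteq> {} \<and> (\<forall>A\<in>P. closedin X A)
     \<and> (\<forall>A\<in>P. \<forall>B\<in>P. A \<union> B \<in> P)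
     \<and> (\<forall>A\<in>P. \<forall>B. closedin X B \<and> B \<subseteq> A \<longrightarrow> B \<in> P)"

(* C(X)_P; functions X -> R are represented as functions vanishing off topspace X *)
definition CP :: "'a topology \<Rightarrow> 'a set set \<Rightarrow> ('a \<Rightarrow> real) set" where
  "CP X P = {f. (\<forall>x. x \<notin> topspace X \<longrightarrow> f x = 0) \<and> X closure_of (disc_set X f) \<in> P}"

definition CP_ring :: "'a topology \<Rightarrow> 'a set set \<Rightarrow> ('a \<Rightarrow> real) ring" where
  "CP_ring X P = \<lparr> carrier = CP X P,
                   monoid.mult = (\<lambda>f g x. f x * g x),
                   one = (\<lambda>x. if x \<in> topspace X then 1 else 0),
                   zero = (\<lambda>x. 0),
                   add = (\<lambda>f g x. f x + g x) \<rparr>"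

definition ZP :: "'a topology \<Rightarrow> ('a \<Rightarrow> real) \<Rightarrow> 'a set" where
  "ZP X f = {x \<in> topspace X. f x = 0}"

definition coz :: "'a topology \<Rightarrow> ('a \<Rightarrow> real) \<Rightarrow> 'a set" where
  "coz X f = topspace X - ZP X f"

definition XP :: "'a topology \<Rightarrow> 'a set set \<Rightarrow> 'a topology" where
  "XP X P = topology_generated_by {coz X f | f. f \<in> CP X P}"

definition Mset :: "('b, 'm) ring_scheme \<Rightarrow> 'b \<Rightarrow> 'b set" where
  "Mset R a = carrier R \<inter> \<Inter> {M. maximalideal M R \<and> a \<in> M}"

definition z_ideal :: "('b, 'm) ring_scheme \<Rightarrow> 'b set \<Rightarrow> bool" where
  "z_ideal R I \<longleftrightarrow> ideal I R \<and> (\<forall>a\<in>I. Mset R a \<subseteq> I)"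

definition essential_ideal :: "('b, 'm) ring_scheme \<Rightarrow> 'b set \<Rightarrow> bool" where
  "essential_ideal R E \<longleftrightarrow> ideal E R \<and>
     (\<forall>I. ideal I R \<and> I \<noteq> {\<zero>\<^bsub>R\<^esub>} \<longrightarrow> E \<inter> I \<noteq> {\<zero>\<^bsub>R\<^esub>})"

end

theory Submission
  imports Defs
begin

text \<open>A function of \<open>C(X)\<^sub>P\<close> is nonzero at \<open>x\<close> exactly when it lies outside the maximal ideal
  \<open>M\<^sub>x = {f. f x = 0}\<close>; hence every function in \<open>M(a)\<close> vanishes on \<open>Z(a)\<close>, and for any set \<open>Z\<close>
  the functions with cozero set inside \<open>Z\<close> form a \<open>z\<close>-ideal. Such a \<open>z\<close>-ideal is nonzero as soon
  as \<open>Z\<close> has nonempty interior in \<open>X\<^sub>P\<close>, since cozero sets form a base of \<open>X\<^sub>P\<close>; taking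
  \<open>Z = \<Inter>Z[E]\<close> it meets \<open>E\<close> only in \<open>0\<close>. Conversely, if \<open>\<Inter>Z[E]\<close> has empty interior, every nonzero
  \<open>f\<close> in an ideal \<open>I\<close> has a point of its (open) cozero set outside \<open>\<Inter>Z[E]\<close>, i.e. some \<open>g \<in> E\<close> with
  \<open>g f \<noteq> 0\<close>, and \<open>g f \<in> E \<inter> I\<close>.\<close>

lemma CP_ring_simps [simp]:
  "carrier (CP_ring X P) = CP X P"
  "mult (CP_ring X P) = (\<lambda>f g x. f x * g x)"
  "add (CP_ring X P) = (\<lambda>f g x. f x + g x)"
  "zero (CP_ring X P) = (\<lambda>x. 0)"
  "one (CP_ring X P) = (\<lambda>x. if x \<in> topspace X then 1 else 0)"
  by (simp_all add: CP_ring_def)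

lemma coz_iff: "x \<in> coz X f \<longleftrightarrow> x \<in> topspace X \<and> f x \<noteq> 0"
  by (auto simp: coz_def ZP_def)

lemma CP_vanishes_outside: "f \<in> CP X P \<Longrightarrow> x \<notin> topspace X \<Longrightarrow> f x = 0"
  by (simp add: CP_def)

lemma CP_eq_zero_iff_coz_empty: "f \<in> CP X P \<Longrightarrow> f = (\<lambda>x. 0) \<longleftrightarrow> coz X f = {}"
  using CP_vanishes_outside[of f X P] by (auto simp: coz_iff fun_eq_iff set_eq_iff)

lemma coz_zero [simp]: "coz X (\<lambda>x. 0) = {}"
  by (auto simp: coz_iff)

lemma coz_uminus [simp]: "coz X (\<lambda>x. - f x) = coz X f"
  by (auto simp: coz_iff)

lemma coz_add_subset: "coz X (\<lambda>x. f x + g x) \<subseteq> coz X f \<union> coz X g"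
  by (auto simp: coz_iff)

lemma coz_mult_subset: "coz X (\<lambda>x. h x * f x) \<subseteq> coz X f"
  by (auto simp: coz_iff)

lemma ideal_subset_CP: "ideal I (CP_ring X P) \<Longrightarrow> I \<subseteq> CP X P"
  using additive_subgroup.a_subset[OF ideal.axioms(1)] by fastforce

lemma const_in_CP:
  assumes "closed_ideal X P"
  shows "(\<lambda>x. if x \<in> topspace X then c else 0) \<in> CP X P"
proof -
  let ?g = "\<lambda>x. if x \<in> topspace X then c else (0::real)"
  have "cont_at X ?g x" if "x \<in> topspace X" for x
    unfolding cont_at_def using that openin_topspace[of X] by (intro allI impI exI[of _ "topspace X"]) auto
  then have "disc_set X ?g = {}"
    unfolding disc_set_def by blast
  moreover have "{} \<in> P"
    using assms closedin_empty[of X] unfolding closed_ideal_def by blast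
  ultimately show ?thesis
    unfolding CP_def by simp
qed

text \<open>The ring axioms of \<open>C(X)\<^sub>P\<close> are taken as a hypothesis: in the theorem they come with the
  assumption that \<open>E\<close> is an ideal of it.\<close>

locale CP_ring_setting =
  fixes X :: "'a topology" and P :: "'a set set"
  assumes ring_CP: "ring (CP_ring X P)" and closed_ideal_P: "closed_ideal X P"
begin

sublocale ring "CP_ring X P"
  by (rule ring_CP)

lemma a_inv_CP: "f \<in> CP X P \<Longrightarrow> \<ominus>\<^bsub>CP_ring X P\<^esub> f = (\<lambda>x. - f x)"
  using r_neg[of f] by (simp add: fun_eq_iff add_eq_0_iff2)

lemma CP_add: "f \<in> CP X P \<Longrightarrow> g \<in> CP X P \<Longrightarrow> (\<lambda>x. f x + g x) \<in> CP X P"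
  using add.m_closed[of f g] by simp

lemma CP_mult: "f \<in> CP X P \<Longrightarrow> g \<in> CP X P \<Longrightarrow> (\<lambda>x. f x * g x) \<in> CP X P"
  using m_closed[of f g] by simp

lemma CP_uminus: "f \<in> CP X P \<Longrightarrow> (\<lambda>x. - f x) \<in> CP X P"
  using a_inv_closed[of f] a_inv_CP by simp

lemma ideal_CP_ringI:
  assumes "I \<subseteq> CP X P" and "(\<lambda>x. 0) \<in> I"
    and "\<And>f g. f \<in> I \<Longrightarrow> g \<in> I \<Longrightarrow> (\<lambda>x. f x + g x) \<in> I"
    and "\<And>f. f \<in> I \<Longrightarrow> (\<lambda>x. - f x) \<in> I"
    and "\<And>f h. f \<in> I \<Longrightarrow> h \<in> CP X P \<Longrightarrow> (\<lambda>x. h x * f x) \<in> I"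
  shows "ideal I (CP_ring X P)"
proof (rule idealI[OF ring_CP])
  show "subgroup I (add_monoid (CP_ring X P))"
    using assms(1-4) a_inv_CP by (intro add.subgroupI) auto
qed (use assms(5) in \<open>auto simp: mult.commute\<close>)

lemma maximalideal_vanishing_at:
  assumes x: "x \<in> topspace X"
  shows "maximalideal {f \<in> CP X P. f x = 0} (CP_ring X P)"
proof -
  let ?M = "{f \<in> CP X P. f x = 0}"
  have M: "ideal ?M (CP_ring X P)"
    by (rule ideal_CP_ringI) (auto intro: CP_add CP_uminus CP_mult simp: zero_closed[simplified])
  show ?thesis
  proof (rule maximalidealI[OF M])
    have "\<one>\<^bsub>CP_ring X P\<^esub> \<notin> ?M"
      using x by simp
    then show "carrier (CP_ring X P) \<noteq> ?M"
      using one_closed by blast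
    fix J assume J: "ideal J (CP_ring X P)" "?M \<subseteq> J" "J \<subseteq> carrier (CP_ring X P)"
    show "J = ?M \<or> J = carrier (CP_ring X P)"
    proof (cases "J = ?M")
      case False
      then obtain g where g: "g \<in> J" "g x \<noteq> 0"
        using J by auto
      define k where "k = (\<lambda>y. if y \<in> topspace X then 1 / g x else 0)"
      have "k \<in> CP X P"
        unfolding k_def by (rule const_in_CP[OF closed_ideal_P])
      then have kg: "(\<lambda>y. k y * g y) \<in> J"
        using ideal.I_l_closed[OF J(1) g(1)] by simp
      \<comment> \<open>\<open>1 - k g\<close> vanishes at \<open>x\<close>, so lies in \<open>M\<^sub>x \<subseteq> J\<close>; adding \<open>k g\<close> shows \<open>1 \<in> J\<close>.\<close>
      define h where "h = (\<lambda>y. (if y \<in> topspace X then 1 else 0) + - (k y * g y))"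
      have "h \<in> CP X P"
        unfolding h_def using one_closed kg J(3) by (intro CP_add CP_uminus) auto
      moreover have "h x = 0"
        using x g(2) by (simp add: h_def k_def)
      ultimately have "h \<in> J"
        using J(2) by blast
      then have "(\<lambda>y. h y + k y * g y) \<in> J"
        using kg ideal.axioms(1)[OF J(1)] additive_subgroup.a_closed by fastforce
      moreover have "(\<lambda>y. h y + k y * g y) = \<one>\<^bsub>CP_ring X P\<^esub>"
        by (simp add: h_def fun_eq_iff)
      ultimately have "J = carrier (CP_ring X P)"
        using ideal.one_imp_carrier[OF J(1)] by simp
      then show ?thesis ..
    qed simp
  qed
qed

lemma coz_subset_of_Mset:
  assumes "b \<in> Mset (CP_ring X P) a" and "a \<in> CP X P"
  shows "coz X b \<subseteq> coz X a"
proof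
  fix x assume "x \<in> coz X b"
  then have x: "x \<in> topspace X" "b x \<noteq> 0"
    by (auto simp: coz_iff)
  have "a \<notin> {f \<in> CP X P. f x = 0}"
    using assms x(2) maximalideal_vanishing_at[OF x(1)] unfolding Mset_def by blast
  then show "x \<in> coz X a"
    using assms(2) x(1) by (simp add: coz_iff)
qed

lemma z_ideal_coz_subset: "z_ideal (CP_ring X P) {g \<in> CP X P. coz X g \<subseteq> Z}"
  unfolding z_ideal_def
proof (intro conjI ballI subsetI)
  show "ideal {g \<in> CP X P. coz X g \<subseteq> Z} (CP_ring X P)"
  proof (rule ideal_CP_ringI)
    show "(\<lambda>x. 0) \<in> {g \<in> CP X P. coz X g \<subseteq> Z}"
      using zero_closed by simp
    show "(\<lambda>x. f x + g x) \<in> {g \<in> CP X P. coz X g \<subseteq> Z}"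
      if "f \<in> {g \<in> CP X P. coz X g \<subseteq> Z}" "g \<in> {g \<in> CP X P. coz X g \<subseteq> Z}" for f g
      using that CP_add coz_add_subset[of X f g] by blast
    show "(\<lambda>x. h x * f x) \<in> {g \<in> CP X P. coz X g \<subseteq> Z}"
      if "f \<in> {g \<in> CP X P. coz X g \<subseteq> Z}" "h \<in> CP X P" for f h
      using that CP_mult coz_mult_subset[of X h f] by blast
  qed (auto intro: CP_uminus)
  fix a b assume "a \<in> {g \<in> CP X P. coz X g \<subseteq> Z}" and b: "b \<in> Mset (CP_ring X P) a"
  moreover have "b \<in> CP X P"
    using b by (simp add: Mset_def)
  ultimately show "b \<in> {g \<in> CP X P. coz X g \<subseteq> Z}"
    using coz_subset_of_Mset by blast
qed

lemma openin_XP_coz: "f \<in> CP X P \<Longrightarrow> openin (XP X P) (coz X f)"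
  unfolding XP_def by (rule topology_generated_by_Basis) blast

text \<open>Cozero sets are closed under finite intersections, so they form a base, not only a subbase,
  of \<open>X\<^sub>P\<close>.\<close>

lemma coz_base_XP:
  assumes "openin (XP X P) U" and "y \<in> U"
  shows "\<exists>f\<in>CP X P. y \<in> coz X f \<and> coz X f \<subseteq> U"
proof -
  have "generate_topology_on {coz X f | f. f \<in> CP X P} U"
    using assms(1) unfolding XP_def by (rule openin_topology_generated_by)
  then have "\<forall>y\<in>U. \<exists>f\<in>CP X P. y \<in> coz X f \<and> coz X f \<subseteq> U"
  proof (induction rule: generate_topology_on.induct)
    case (Int a b)
    show ?case
    proof
      fix y assume "y \<in> a \<inter> b"
      then obtain f g where "f \<in> CP X P" "y \<in> coz X f" "coz X f \<subseteq> a"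
        and "g \<in> CP X P" "y \<in> coz X g" "coz X g \<subseteq> b"
        using Int.IH by blast
      moreover have "coz X (\<lambda>x. f x * g x) = coz X f \<inter> coz X g"
        by (auto simp: coz_iff)
      ultimately show "\<exists>h\<in>CP X P. y \<in> coz X h \<and> coz X h \<subseteq> a \<inter> b"
        using CP_mult by blast
    qed
  qed blast+
  then show ?thesis
    using assms(2) by blast
qed

lemma inter_coz_subset_ZP_trivial:
  assumes "E \<subseteq> CP X P"
  shows "E \<inter> {g \<in> CP X P. coz X g \<subseteq> \<Inter> {ZP X f | f. f \<in> E}} \<subseteq> {\<zero>\<^bsub>CP_ring X P\<^esub>}"
proof
  fix g assume g: "g \<in> E \<inter> {g \<in> CP X P. coz X g \<subseteq> \<Inter> {ZP X f | f. f \<in> E}}"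
  then have "coz X g \<subseteq> ZP X g"
    by blast
  then have "coz X g = {}"
    by (auto simp: coz_def)
  then show "g \<in> {\<zero>\<^bsub>CP_ring X P\<^esub>}"
    using g CP_eq_zero_iff_coz_empty by auto
qed

lemma interior_inter_ZP_empty_if_meets_z_ideals:
  assumes E: "ideal E (CP_ring X P)"
    and meets: "\<And>I. z_ideal (CP_ring X P) I \<Longrightarrow> I \<noteq> {\<zero>\<^bsub>CP_ring X P\<^esub>}
                  \<Longrightarrow> E \<inter> I \<noteq> {\<zero>\<^bsub>CP_ring X P\<^esub>}"
  shows "XP X P interior_of (\<Inter> {ZP X f | f. f \<in> E}) = {}"
proof (rule ccontr)
  let ?Z = "\<Inter> {ZP X f | f. f \<in> E}"
  let ?I = "{g \<in> CP X P. coz X g \<subseteq> ?Z}"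
  assume "XP X P interior_of ?Z \<noteq> {}"
  then obtain y where "y \<in> XP X P interior_of ?Z"
    by blast
  then obtain f where f: "f \<in> CP X P" "y \<in> coz X f" "coz X f \<subseteq> XP X P interior_of ?Z"
    using coz_base_XP[OF openin_interior_of] by blast
  then have "f \<in> ?I"
    using interior_of_subset[of "XP X P" ?Z] by blast
  moreover have "f \<noteq> \<zero>\<^bsub>CP_ring X P\<^esub>"
    using CP_eq_zero_iff_coz_empty[OF f(1)] f(2) by auto
  ultimately have "E \<inter> ?I \<noteq> {\<zero>\<^bsub>CP_ring X P\<^esub>}"
    by (intro meets[OF z_ideal_coz_subset]) blast
  moreover have "\<zero>\<^bsub>CP_ring X P\<^esub> \<in> E \<inter> ?I"
    using additive_subgroup.zero_closed[OF ideal.axioms(1)[OF E]] zero_closed by simp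
  ultimately show False
    using inter_coz_subset_ZP_trivial[OF ideal_subset_CP[OF E]] by blast
qed

lemma essential_ideal_if_interior_inter_ZP_empty:
  assumes E: "ideal E (CP_ring X P)"
    and empty: "XP X P interior_of (\<Inter> {ZP X f | f. f \<in> E}) = {}"
  shows "essential_ideal (CP_ring X P) E"
  unfolding essential_ideal_def
proof (intro conjI E allI impI)
  fix I assume "ideal I (CP_ring X P) \<and> I \<noteq> {\<zero>\<^bsub>CP_ring X P\<^esub>}"
  then have I: "ideal I (CP_ring X P)" and "I \<noteq> {\<zero>\<^bsub>CP_ring X P\<^esub>}"
    by auto
  moreover have "\<zero>\<^bsub>CP_ring X P\<^esub> \<in> I"
    using additive_subgroup.zero_closed[OF ideal.axioms(1)[OF I]] .
  ultimately obtain f where f: "f \<in> I" "f \<noteq> \<zero>\<^bsub>CP_ring X P\<^esub>"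
    by blast
  have fc: "f \<in> CP X P"
    using f(1) ideal_subset_CP[OF I] by blast
  have "coz X f \<noteq> {}"
    using CP_eq_zero_iff_coz_empty[OF fc] f(2) by simp
  then have "\<not> coz X f \<subseteq> \<Inter> {ZP X f | f. f \<in> E}"
    using interior_of_maximal[OF _ openin_XP_coz[OF fc]] empty by blast
  then obtain z where z: "z \<in> coz X f" "z \<notin> \<Inter> {ZP X f | f. f \<in> E}"
    by blast
  then obtain g where g: "g \<in> E" "z \<notin> ZP X g"
    by blast
  have gc: "g \<in> CP X P"
    using g(1) ideal_subset_CP[OF E] by blast
  have "g \<otimes>\<^bsub>CP_ring X P\<^esub> f \<in> E"
    using ideal.I_r_closed[OF E g(1)] fc by simp
  moreover have "g \<otimes>\<^bsub>CP_ring X P\<^esub> f \<in> I"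
    using ideal.I_l_closed[OF I f(1)] gc by simp
  moreover have "g z * f z \<noteq> 0"
    using z(1) g(2) by (simp add: coz_iff ZP_def)
  then have "g \<otimes>\<^bsub>CP_ring X P\<^esub> f \<noteq> \<zero>\<^bsub>CP_ring X P\<^esub>"
    by (auto dest: fun_cong[of _ _ z])
  ultimately show "E \<inter> I \<noteq> {\<zero>\<^bsub>CP_ring X P\<^esub>}"
    by blast
qed

end

theorem theorem2p16:
  fixes X :: "'a topology" and P :: "'a set set" and E :: "('a \<Rightarrow> real) set"
  assumes "t1_space X"
    and "closed_ideal X P"
    and "ideal E (CP_ring X P)"
    and "E \<noteq> {\<zero>\<^bsub>CP_ring X P\<^esub>}"
  shows "((\<forall>I. z_ideal (CP_ring X P) I \<and> I \<noteq> {\<zero>\<^bsub>CP_ring X P\<^esub>}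
              \<longrightarrow> E \<inter> I \<noteq> {\<zero>\<^bsub>CP_ring X P\<^esub>})
          \<longleftrightarrow> essential_ideal (CP_ring X P) E)
       \<and> (essential_ideal (CP_ring X P) E
          \<longleftrightarrow> (XP X P) interior_of (\<Inter> {ZP X f | f. f \<in> E}) = {})"
proof -
  interpret CP_ring_setting X P
    using CP_ring_setting.intro[OF ideal.axioms(2)[OF assms(3)] assms(2)] .
  have z_to_interior: "(\<forall>I. z_ideal (CP_ring X P) I \<and> I \<noteq> {\<zero>\<^bsub>CP_ring X P\<^esub>}
      \<longrightarrow> E \<inter> I \<noteq> {\<zero>\<^bsub>CP_ring X P\<^esub>}) \<Longrightarrow> XP X P interior_of (\<Inter> {ZP X f | f. f \<in> E}) = {}"
    using interior_inter_ZP_empty_if_meets_z_ideals[OF assms(3)] by blast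
  have interior_to_essential: "XP X P interior_of (\<Inter> {ZP X f | f. f \<in> E}) = {}
      \<Longrightarrow> essential_ideal (CP_ring X P) E"
    using essential_ideal_if_interior_inter_ZP_empty[OF assms(3)] .
  have essential_to_z: "essential_ideal (CP_ring X P) E \<Longrightarrow>
      \<forall>I. z_ideal (CP_ring X P) I \<and> I \<noteq> {\<zero>\<^bsub>CP_ring X P\<^esub>} \<longrightarrow> E \<inter> I \<noteq> {\<zero>\<^bsub>CP_ring X P\<^esub>}"
    by (simp add: essential_ideal_def z_ideal_def)
  show ?thesis
    using z_to_interior interior_to_essential essential_to_z by blast
qed

end
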